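(* Suppose $f \in \mathbb{C}[x_1,\dots,x_n]_d$ has a local border decomposition with $r$ summands based at $[\ell]$, where $\ell\in\mathbb{C}[x_1,\dots,x_n]_1$ is nonzero. If $d \ge r-1$, then $f = \ell^{d-r+1} g$ for some homogeneous polynomial $g$ of degree $r-1$.
   Context: Let $\mathbb{C}(\epsilon)[\boldsymbol{x}]_1$ be the set of linear forms in $x_1,\dots,x_n$ with coefficients rational functions of $\epsilon$. A nonzero $\ell(\epsilon)\in\mathbb{C}(\epsilon)[\boldsymbol{x}]_1$ can be expanded as a Laurent series $\ell(\epsilon)=\sum_{i\ge q}\epsilon^i \ell_i$ with $\ell_i\in\mathbb{C}[\boldsymbol{x}]_1$, $\ell_q\neq 0$; its projective limit is $\lim_{\epsilon\to0}[\ell(\epsilon)] := [\ell_q]$. A local border decomposition of $f$ with $r$ summands based at $[\ell]$ is an expression $f=\lim_{\epsilon\to0}\sum_{k=1}^r \ell_k^d$ (limit taken coefficientwise) with $\ell_k\in\mathbb{C}(\epsilon)[\boldsymbol{x}]_1$ and $\lim_{\epsilon\to0}[\ell_k(\epsilon)]=[\ell]$ for all $k$. *)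

theory Defs
  imports "HOL-Library.Poly_Mapping" "HOL-Computational_Algebra.Polynomial_FPS"
          "HOL-Computational_Algebra.Formal_Laurent_Series"
begin

text \<open>Polynomials in the variables x_0, x_1, ... with coefficients in 'a:
  finitely supported maps from monomials (exponent vectors) to coefficients,
  with the convolution (polynomial) product of HOL-Library.Poly_Mapping.\<close>
type_synonym 'a mpoly = "(nat \<Rightarrow>\<^sub>0 nat) \<Rightarrow>\<^sub>0 'a"

definition mono_deg :: "(nat \<Rightarrow>\<^sub>0 nat) \<Rightarrow> nat" where
  "mono_deg m = (\<Sum>i\<in>Poly_Mapping.keys m. Poly_Mapping.lookup m i)"

text \<open>p lies in K[x_1,...,x_n]_d: homogeneous of degree d (or zero),
  only variables with index < n occur.\<close>
definition hom_poly :: "nat \<Rightarrow> nat \<Rightarrow> 'a::zero mpoly \<Rightarrow> bool" where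
  "hom_poly n d p \<longleftrightarrow> (\<forall>m\<in>Poly_Mapping.keys p. mono_deg m = d \<and> (\<forall>i\<in>Poly_Mapping.keys m. i < n))"

text \<open>The field C(eps) of rational functions, viewed inside formal Laurent
  series C((eps)) via Laurent expansion at eps = 0: an element is rational
  iff it equals a quotient p/q of polynomials, q \<noteq> 0.\<close>
definition rat_fls :: "complex fls \<Rightarrow> bool" where
  "rat_fls c \<longleftrightarrow> (\<exists>p q :: complex poly. q \<noteq> 0 \<and>
      c * fps_to_fls (fps_of_poly q) = fps_to_fls (fps_of_poly p))"

definition rat_coeffs :: "complex fls mpoly \<Rightarrow> bool" where
  "rat_coeffs p \<longleftrightarrow> (\<forall>m. rat_fls (Poly_Mapping.lookup p m))"

definition laurent_coeff :: "complex fls mpoly \<Rightarrow> int \<Rightarrow> complex mpoly" where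
  "laurent_coeff p i = Poly_Mapping.map (\<lambda>c. fls_nth c i) p"

definition laurent_order :: "complex fls mpoly \<Rightarrow> int" where
  "laurent_order p = Min (fls_subdegree ` Poly_Mapping.lookup p ` Poly_Mapping.keys p)"

text \<open>Representative l_q of the projective limit of [l(eps)].\<close>
definition proj_lim_rep :: "complex fls mpoly \<Rightarrow> complex mpoly" where
  "proj_lim_rep p = laurent_coeff p (laurent_order p)"

definition proj_eq :: "complex mpoly \<Rightarrow> complex mpoly \<Rightarrow> bool" where
  "proj_eq a b \<longleftrightarrow> a \<noteq> 0 \<and> b \<noteq> 0 \<and> (\<exists>c. c \<noteq> 0 \<and> a = Poly_Mapping.map (\<lambda>x. c * x) b)"

definition coeffwise_lim :: "complex fls mpoly \<Rightarrow> complex mpoly \<Rightarrow> bool" where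
  "coeffwise_lim F f \<longleftrightarrow>
     (\<forall>m. (\<forall>i<0. fls_nth (Poly_Mapping.lookup F m) i = 0) \<and> fls_nth (Poly_Mapping.lookup F m) 0 = Poly_Mapping.lookup f m)"

definition local_border_dec ::
    "nat \<Rightarrow> nat \<Rightarrow> complex mpoly \<Rightarrow> nat \<Rightarrow> complex mpoly \<Rightarrow> (nat \<Rightarrow> complex fls mpoly) \<Rightarrow> bool" where
  "local_border_dec n d f r l ls \<longleftrightarrow>
     (\<forall>k<r. ls k \<noteq> 0 \<and> hom_poly n 1 (ls k) \<and> rat_coeffs (ls k)
            \<and> proj_eq (proj_lim_rep (ls k)) l)
     \<and> coeffwise_lim (\<Sum>k<r. ls k ^ d) f"

end

theory Submission
  imports Defs
begin

text \<open>Normalise every summand as \<open>\<alpha>\<^sub>k (l + \<beta>\<^sub>k)\<close>, where \<open>\<alpha>\<^sub>k\<close> is a Laurent series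
  and \<open>\<beta>\<^sub>k\<close> is a linear form whose coefficients vanish at \<open>\<epsilon> = 0\<close> and which does
  not involve a variable \<open>x\<^sub>j\<close> occurring in \<open>l\<close>. The binomial theorem writes the
  sum of the \<open>d\<close>-th powers as \<open>\<Sum>\<^sub>s\<^sub>\<le>\<^sub>d (d choose s) l\<^sup>d\<^sup>-\<^sup>s B\<^sub>s\<close> with power sums
  \<open>B\<^sub>s = \<Sum>\<^sub>k \<alpha>\<^sub>k\<^sup>d \<beta>\<^sub>k\<^sup>s\<close>, none of which involves \<open>x\<^sub>j\<close>. Such an expansion in powers
  of \<open>l\<close> is unique, so the absence of poles in the sum forces each \<open>B\<^sub>s\<close>, \<open>s \<le> d\<close>,
  to be free of poles. The \<open>B\<^sub>s\<close> satisfy the linear recurrence with characteristic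
  polynomial \<open>\<Prod>\<^sub>k (X - \<beta>\<^sub>k)\<close>, whose non-leading coefficients vanish at \<open>\<epsilon> = 0\<close>;
  hence \<open>B\<^sub>s\<close> vanishes at \<open>\<epsilon> = 0\<close> for \<open>s \<ge> r\<close>, and in the limit only the terms
  with \<open>s < r\<close> survive, each divisible by \<open>l\<^sup>d\<^sup>+\<^sup>1\<^sup>-\<^sup>r\<close>.\<close>

lemma lookup_map:
  "f 0 = 0 \<Longrightarrow> Poly_Mapping.lookup (Poly_Mapping.map f p) k = f (Poly_Mapping.lookup p k)"
  by (simp add: Poly_Mapping.map.rep_eq when_def)

lemma keys_map_subset: "Poly_Mapping.keys (Poly_Mapping.map f p) \<subseteq> Poly_Mapping.keys p"
  by (auto simp: in_keys_iff Poly_Mapping.map.rep_eq when_def)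

lemma lookup_single_0_mult:
  "Poly_Mapping.lookup (Poly_Mapping.single 0 c * p) m = c * Poly_Mapping.lookup p m"
  by (simp add: mult_map_scale_conv_mult[symmetric] lookup_map)

lemma lookup_mult_finite:
  fixes f g :: "'a::comm_monoid_add \<Rightarrow>\<^sub>0 'b::comm_semiring_0"
  assumes "finite A" "Poly_Mapping.keys f \<subseteq> A" "finite B" "Poly_Mapping.keys g \<subseteq> B"
  shows "Poly_Mapping.lookup (f * g) k =
    (\<Sum>a\<in>A. \<Sum>b\<in>B. Poly_Mapping.lookup f a * Poly_Mapping.lookup g b when k = a + b)"
proof -
  have inner: "Sum_any (\<lambda>q. Poly_Mapping.lookup g q when k = a + q) =
      (\<Sum>b\<in>B. Poly_Mapping.lookup g b when k = a + b)" for a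
    by (rule Sum_any.expand_superset) (use assms in \<open>auto simp: in_keys_iff\<close>)
  have "Poly_Mapping.lookup (f * g) k =
      Sum_any (\<lambda>a. Poly_Mapping.lookup f a * (\<Sum>b\<in>B. Poly_Mapping.lookup g b when k = a + b))"
    by (simp add: lookup_mult inner)
  also have "\<dots> = (\<Sum>a\<in>A. Poly_Mapping.lookup f a * (\<Sum>b\<in>B. Poly_Mapping.lookup g b when k = a + b))"
    by (rule Sum_any.expand_superset) (use assms in \<open>auto simp: in_keys_iff dest!: mult_not_zero\<close>)
  finally show ?thesis
    by (simp add: sum_distrib_left mult_when)
qed

lemma lookup_mult_unique_sum:
  fixes p q :: "'a::comm_monoid_add \<Rightarrow>\<^sub>0 'b::comm_semiring_0"
  assumes "\<And>a b. a \<in> Poly_Mapping.keys p \<Longrightarrow> b \<in> Poly_Mapping.keys q \<Longrightarrow> a + b = u + v \<Longrightarrow> a = u \<and> b = v"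
  shows "Poly_Mapping.lookup (p * q) (u + v) = Poly_Mapping.lookup p u * Poly_Mapping.lookup q v"
proof -
  have summand: "(Poly_Mapping.lookup p a * Poly_Mapping.lookup q b when u + v = a + b) =
      (if a = u \<and> b = v then Poly_Mapping.lookup p u * Poly_Mapping.lookup q v else 0)" for a b
  proof (cases "Poly_Mapping.lookup p a * Poly_Mapping.lookup q b = 0")
    case False
    then have "a \<in> Poly_Mapping.keys p" "b \<in> Poly_Mapping.keys q"
      by (auto simp: in_keys_iff)
    with assms[of a b] show ?thesis
      by (auto simp: when_def)
  qed (auto simp: when_def)
  have "Poly_Mapping.lookup (p * q) (u + v) = (\<Sum>a\<in>insert u (Poly_Mapping.keys p). \<Sum>b\<in>insert v (Poly_Mapping.keys q).
      Poly_Mapping.lookup p a * Poly_Mapping.lookup q b when u + v = a + b)"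
    by (rule lookup_mult_finite) auto
  also have "\<dots> = (\<Sum>a\<in>insert u (Poly_Mapping.keys p).
      if a = u then Poly_Mapping.lookup p u * Poly_Mapping.lookup q v else 0)"
    by (intro sum.cong refl) (simp add: summand)
  finally show ?thesis
    by simp
qed

section \<open>Homogeneous polynomials\<close>

lemma mono_deg_eq_sum:
  assumes "finite S" "Poly_Mapping.keys m \<subseteq> S"
  shows "mono_deg m = (\<Sum>i\<in>S. Poly_Mapping.lookup m i)"
  unfolding mono_deg_def
  by (rule sum.mono_neutral_left) (use assms in \<open>auto simp: in_keys_iff\<close>)

lemma mono_deg_0 [simp]: "mono_deg 0 = 0"
  by (simp add: mono_deg_def)

lemma mono_deg_add: "mono_deg (a + b) = mono_deg a + mono_deg b"
proof -
  let ?S = "Poly_Mapping.keys a \<union> Poly_Mapping.keys b"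
  have "mono_deg (a + b) = (\<Sum>i\<in>?S. Poly_Mapping.lookup (a + b) i)"
    by (rule mono_deg_eq_sum) (auto dest: subsetD[OF keys_add])
  moreover have "mono_deg a = (\<Sum>i\<in>?S. Poly_Mapping.lookup a i)"
    by (rule mono_deg_eq_sum) auto
  moreover have "mono_deg b = (\<Sum>i\<in>?S. Poly_Mapping.lookup b i)"
    by (rule mono_deg_eq_sum) auto
  ultimately show ?thesis
    by (simp add: lookup_add sum.distrib)
qed

lemma mono_deg_1_eq_single:
  assumes "mono_deg m = 1" "i \<in> Poly_Mapping.keys m"
  shows "m = Poly_Mapping.single i 1"
proof -
  have "mono_deg m = Poly_Mapping.lookup m i + (\<Sum>k\<in>Poly_Mapping.keys m - {i}. Poly_Mapping.lookup m k)"
    unfolding mono_deg_def using assms(2) by (simp add: sum.remove)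
  moreover have "Poly_Mapping.lookup m i \<noteq> 0"
    using assms(2) by (simp add: in_keys_iff)
  ultimately have mi: "Poly_Mapping.lookup m i = 1"
    and rest: "(\<Sum>k\<in>Poly_Mapping.keys m - {i}. Poly_Mapping.lookup m k) = 0"
    using assms(1) by linarith+
  have "Poly_Mapping.lookup m k = 0" if "k \<noteq> i" for k
  proof (cases "k \<in> Poly_Mapping.keys m")
    case True
    with rest that show ?thesis
      by (simp add: sum_eq_0_iff)
  qed (simp add: in_keys_iff)
  with mi show ?thesis
    by (intro poly_mapping_eqI) (auto simp: lookup_single when_def)
qed

lemma hom_poly_subset:
  "hom_poly n d p \<Longrightarrow> Poly_Mapping.keys q \<subseteq> Poly_Mapping.keys p \<Longrightarrow> hom_poly n d q"
  by (auto simp: hom_poly_def)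

lemma hom_poly_zero [simp]: "hom_poly n d 0"
  by (simp add: hom_poly_def)

lemma hom_poly_add: "hom_poly n d p \<Longrightarrow> hom_poly n d q \<Longrightarrow> hom_poly n d (p + q)"
  using keys_add by (fastforce simp: hom_poly_def)

lemma hom_poly_diff:
  "hom_poly n d p \<Longrightarrow> hom_poly n d q \<Longrightarrow> hom_poly n d (p - q :: 'a::ab_group_add mpoly)"
  using keys_diff by (fastforce simp: hom_poly_def)

lemma hom_poly_sum: "(\<And>x. x \<in> S \<Longrightarrow> hom_poly n d (f x)) \<Longrightarrow> hom_poly n d (sum f S)"
  by (induction S rule: infinite_finite_induct) (simp_all add: hom_poly_add)

lemma hom_poly_map: "hom_poly n d p \<Longrightarrow> hom_poly n d (Poly_Mapping.map h p)"
  by (rule hom_poly_subset[OF _ keys_map_subset])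

lemma hom_poly_mult:
  fixes p q :: "'a::comm_semiring_0 mpoly"
  assumes "hom_poly n a p" "hom_poly n b q"
  shows "hom_poly n (a + b) (p * q)"
  unfolding hom_poly_def
proof
  fix m assume "m \<in> Poly_Mapping.keys (p * q)"
  then obtain x y where "m = x + y" "x \<in> Poly_Mapping.keys p" "y \<in> Poly_Mapping.keys q"
    using keys_mult by blast
  with assms show "mono_deg m = a + b \<and> (\<forall>i\<in>Poly_Mapping.keys m. i < n)"
    unfolding hom_poly_def using keys_add by (fastforce simp: mono_deg_add)
qed

lemma hom_poly_single_0: "hom_poly n 0 (Poly_Mapping.single 0 c)"
  by (simp add: hom_poly_def)

lemma hom_poly_of_nat: "hom_poly n 0 (of_nat c :: 'a::semiring_1 mpoly)"
  by (metis hom_poly_single_0 single_of_nat)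

lemma hom_poly_power:
  fixes p :: "'a::comm_semiring_1 mpoly"
  assumes "hom_poly n a p"
  shows "hom_poly n (s * a) (p ^ s)"
proof (induction s)
  case (Suc s)
  then show ?case
    using hom_poly_mult[OF assms Suc] by simp
qed (simp add: hom_poly_def)

lemma hom_poly_1_ex_var:
  assumes "hom_poly n 1 l" "l \<noteq> 0"
  obtains j where "Poly_Mapping.lookup l (Poly_Mapping.single j 1) \<noteq> 0"
proof -
  obtain u where u: "u \<in> Poly_Mapping.keys l"
    using assms(2) by fastforce
  then have "mono_deg u = 1"
    using assms(1) by (simp add: hom_poly_def)
  then obtain j where "j \<in> Poly_Mapping.keys u"
    by (fastforce simp: mono_deg_def)
  with \<open>mono_deg u = 1\<close> have "u = Poly_Mapping.single j 1"
    by (rule mono_deg_1_eq_single)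
  with u show thesis
    by (intro that[of j]) (simp add: in_keys_iff)
qed

section \<open>Polynomials not involving a variable\<close>

definition free_of_var :: "nat \<Rightarrow> 'a::zero mpoly \<Rightarrow> bool" where
  "free_of_var j p \<longleftrightarrow> (\<forall>m\<in>Poly_Mapping.keys p. Poly_Mapping.lookup m j = 0)"

lemma free_of_var_zero [simp]: "free_of_var j 0"
  by (simp add: free_of_var_def)

lemma free_of_var_add: "free_of_var j p \<Longrightarrow> free_of_var j q \<Longrightarrow> free_of_var j (p + q)"
  using keys_add by (fastforce simp: free_of_var_def)

lemma free_of_var_uminus [simp]: "free_of_var j (- p) \<longleftrightarrow> free_of_var j (p :: 'a::ab_group_add mpoly)"
  by (simp add: free_of_var_def)

lemma free_of_var_sum: "(\<And>x. x \<in> S \<Longrightarrow> free_of_var j (f x)) \<Longrightarrow> free_of_var j (sum f S)"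
  by (induction S rule: infinite_finite_induct) (simp_all add: free_of_var_add)

lemma free_of_var_map: "free_of_var j p \<Longrightarrow> free_of_var j (Poly_Mapping.map h p)"
  using keys_map_subset by (fastforce simp: free_of_var_def)

lemma free_of_var_mult:
  fixes p q :: "'a::comm_semiring_0 mpoly"
  assumes "free_of_var j p" "free_of_var j q"
  shows "free_of_var j (p * q)"
  unfolding free_of_var_def
proof
  fix m assume "m \<in> Poly_Mapping.keys (p * q)"
  then obtain x y where "m = x + y" "x \<in> Poly_Mapping.keys p" "y \<in> Poly_Mapping.keys q"
    using keys_mult by blast
  with assms show "Poly_Mapping.lookup m j = 0"
    by (simp add: free_of_var_def lookup_add)
qed

lemma free_of_var_single_0: "free_of_var j (Poly_Mapping.single 0 c)"
  by (simp add: free_of_var_def)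

lemma free_of_var_power:
  fixes p :: "'a::comm_semiring_1 mpoly"
  assumes "free_of_var j p"
  shows "free_of_var j (p ^ s)"
proof (induction s)
  case (Suc s)
  then show ?case
    using free_of_var_mult[OF assms Suc] by simp
qed (simp add: free_of_var_def)

lemma free_of_var_of_nat: "free_of_var j (of_nat c :: 'a::semiring_1 mpoly)"
  by (metis free_of_var_single_0 single_of_nat)

lemma hom_poly_1_free_of_var:
  assumes "hom_poly n 1 p" "Poly_Mapping.lookup p (Poly_Mapping.single j 1) = 0"
  shows "free_of_var j p"
  unfolding free_of_var_def
proof (rule ballI, rule ccontr)
  fix m assume m: "m \<in> Poly_Mapping.keys p" and "Poly_Mapping.lookup m j \<noteq> 0"
  then have "m = Poly_Mapping.single j 1"
    using assms(1) by (intro mono_deg_1_eq_single) (auto simp: hom_poly_def in_keys_iff)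
  with m assms(2) show False
    by (simp add: in_keys_iff)
qed

text \<open>A monomial \<open>v\<close> of \<open>X\<close> of maximal degree in \<open>x\<^sub>j\<close> gives a term
  \<open>x\<^sub>j v\<close> of \<open>l * X\<close> that nothing can cancel.\<close>

lemma free_of_var_mult_linear_imp_zero:
  fixes l X :: "'a::{comm_semiring_0, semiring_no_zero_divisors} mpoly"
  assumes l: "hom_poly n 1 l" "Poly_Mapping.lookup l (Poly_Mapping.single j 1) \<noteq> 0"
    and free: "free_of_var j (l * X)"
  shows "X = 0"
proof (rule ccontr)
  assume "X \<noteq> 0"
  define u where "u = Poly_Mapping.single j (1::nat)"
  define M where "M = Max ((\<lambda>m. Poly_Mapping.lookup m j) ` Poly_Mapping.keys X)"
  have "M \<in> (\<lambda>m. Poly_Mapping.lookup m j) ` Poly_Mapping.keys X"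
    unfolding M_def using \<open>X \<noteq> 0\<close> by (intro Max_in) auto
  then obtain v where v: "v \<in> Poly_Mapping.keys X" "Poly_Mapping.lookup v j = M"
    by blast
  have unique: "a = u \<and> b = v"
    if a: "a \<in> Poly_Mapping.keys l" and b: "b \<in> Poly_Mapping.keys X" and ab: "a + b = u + v" for a b
  proof (cases "Poly_Mapping.lookup a j = 0")
    case True
    then have "Poly_Mapping.lookup b j = M + 1"
      using arg_cong[OF ab, of "\<lambda>m. Poly_Mapping.lookup m j"] v(2) by (simp add: lookup_add u_def)
    moreover have "Poly_Mapping.lookup b j \<le> M"
      unfolding M_def using b by (intro Max_ge) auto
    ultimately show ?thesis
      by simp
  next
    case False
    then have "a = u"
      using l(1) a unfolding u_def by (intro mono_deg_1_eq_single) (auto simp: hom_poly_def in_keys_iff)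
    with ab show ?thesis
      by simp
  qed
  have "Poly_Mapping.lookup (l * X) (u + v) = Poly_Mapping.lookup l u * Poly_Mapping.lookup X v"
    using unique by (rule lookup_mult_unique_sum)
  also have "\<dots> \<noteq> 0"
    using l(2) v(1) by (simp add: u_def in_keys_iff)
  finally have "u + v \<in> Poly_Mapping.keys (l * X)"
    by (simp add: in_keys_iff)
  with free have "Poly_Mapping.lookup (u + v) j = 0"
    by (simp add: free_of_var_def)
  then show False
    by (simp add: u_def lookup_add)
qed

lemma power_expansion_free_of_var_unique:
  fixes l :: "'a::idom mpoly" and Q :: "nat \<Rightarrow> 'a mpoly"
  assumes l: "hom_poly n 1 l" "Poly_Mapping.lookup l (Poly_Mapping.single j 1) \<noteq> 0"
    and "\<forall>s\<le>d. free_of_var j (Q s)" and "(\<Sum>s\<le>d. l ^ (d - s) * Q s) = 0"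
  shows "\<forall>s\<le>d. Q s = 0"
  using assms(3,4)
proof (induction d)
  case (Suc d)
  let ?X = "\<Sum>s\<le>d. l ^ (d - s) * Q s"
  have "(\<Sum>s\<le>Suc d. l ^ (Suc d - s) * Q s) = (\<Sum>s\<le>d. l ^ (Suc d - s) * Q s) + Q (Suc d)"
    by simp
  also have "(\<Sum>s\<le>d. l ^ (Suc d - s) * Q s) = l * ?X"
    by (simp add: sum_distrib_left Suc_diff_le mult.assoc)
  finally have lX: "l * ?X = - Q (Suc d)"
    using Suc.prems(2) by (simp add: eq_neg_iff_add_eq_0)
  then have X: "?X = 0"
    using Suc.prems(1) by (intro free_of_var_mult_linear_imp_zero[OF l]) simp
  with lX have "Q (Suc d) = 0"
    by simp
  moreover have "\<forall>s\<le>d. Q s = 0"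
    using Suc.prems(1) by (intro Suc.IH X) simp
  ultimately show ?case
    by (simp add: le_Suc_eq)
qed simp

definition laurent_order_ge :: "int \<Rightarrow> 'a::zero fls mpoly \<Rightarrow> bool" where
  "laurent_order_ge t p \<longleftrightarrow> (\<forall>m i. i < t \<longrightarrow> fls_nth (Poly_Mapping.lookup p m) i = 0)"

definition mpoly_to_fls :: "'a::zero mpoly \<Rightarrow> 'a fls mpoly" where
  "mpoly_to_fls p = Poly_Mapping.map fls_const p"

lemma lookup_mpoly_to_fls:
  "Poly_Mapping.lookup (mpoly_to_fls p) m = fls_const (Poly_Mapping.lookup p m)"
  by (simp add: mpoly_to_fls_def lookup_map)

lemma laurent_order_ge_zero [simp]: "laurent_order_ge t 0"
  by (simp add: laurent_order_ge_def)

lemma laurent_order_ge_add: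
  "laurent_order_ge t p \<Longrightarrow> laurent_order_ge t q \<Longrightarrow> laurent_order_ge t (p + q :: 'a::monoid_add fls mpoly)"
  by (simp add: laurent_order_ge_def lookup_add)

lemma laurent_order_ge_uminus:
  "laurent_order_ge t p \<Longrightarrow> laurent_order_ge t (- p :: 'a::ab_group_add fls mpoly)"
  by (simp add: laurent_order_ge_def)

lemma laurent_order_ge_sum:
  "(\<And>x. x \<in> S \<Longrightarrow> laurent_order_ge t (f x)) \<Longrightarrow> laurent_order_ge t (sum f S :: 'a::comm_monoid_add fls mpoly)"
  by (induction S rule: infinite_finite_induct) (simp_all add: laurent_order_ge_add)

lemma laurent_order_ge_mono: "laurent_order_ge t p \<Longrightarrow> s \<le> t \<Longrightarrow> laurent_order_ge s p"
  by (simp add: laurent_order_ge_def)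

lemma fls_nth_mult_eq_0:
  fixes c d :: "'a::comm_semiring_0 fls"
  assumes "\<And>i. i < a \<Longrightarrow> fls_nth c i = 0" "\<And>i. i < b \<Longrightarrow> fls_nth d i = 0" "i < a + b"
  shows "fls_nth (c * d) i = 0"
proof (cases "c = 0 \<or> d = 0")
  case False
  then have "a \<le> fls_subdegree c" "b \<le> fls_subdegree d"
    using assms by (auto intro!: fls_subdegree_geI)
  with assms(3) show ?thesis
    by (intro fls_times_nth_eq0) simp
qed auto

lemma laurent_order_ge_mult:
  fixes p q :: "'a::comm_semiring_0 fls mpoly"
  assumes "laurent_order_ge a p" "laurent_order_ge b q"
  shows "laurent_order_ge (a + b) (p * q)"
  unfolding laurent_order_ge_def
proof (intro allI impI)
  fix m i assume i: "i < a + b"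
  have "fls_nth (Poly_Mapping.lookup (p * q) m) i =
    (\<Sum>x\<in>Poly_Mapping.keys p. \<Sum>y\<in>Poly_Mapping.keys q.
       fls_nth (Poly_Mapping.lookup p x * Poly_Mapping.lookup q y when m = x + y) i)"
    by (simp add: lookup_mult_finite[of "Poly_Mapping.keys p" _ "Poly_Mapping.keys q"] fls_nth_sum)
  also have "\<dots> = 0"
    using assms by (intro sum.neutral ballI)
      (simp add: fls_nth_mult_eq_0[OF _ _ i] laurent_order_ge_def when_def)
  finally show "fls_nth (Poly_Mapping.lookup (p * q) m) i = 0" .
qed

lemma laurent_order_ge_one: "laurent_order_ge 0 (1 :: 'a::comm_semiring_1 fls mpoly)"
  by (simp add: laurent_order_ge_def lookup_one when_def)

lemma laurent_order_ge_single_0_mult: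
  fixes p :: "'a::comm_semiring_0 fls mpoly"
  assumes "\<And>i. i < a \<Longrightarrow> fls_nth c i = 0" "laurent_order_ge b p"
  shows "laurent_order_ge (a + b) (Poly_Mapping.single 0 c * p)"
  using assms unfolding laurent_order_ge_def mult_map_scale_conv_mult[symmetric]
  by (auto simp: lookup_map intro: fls_nth_mult_eq_0)

lemma lookup_laurent_coeff:
  "Poly_Mapping.lookup (laurent_coeff p i) m = fls_nth (Poly_Mapping.lookup p m) i"
  by (simp add: laurent_coeff_def lookup_map)

lemma laurent_coeff_zero [simp]: "laurent_coeff 0 i = 0"
  by (rule poly_mapping_eqI) (simp add: lookup_laurent_coeff)

lemma laurent_coeff_add: "laurent_coeff (p + q) i = laurent_coeff p i + laurent_coeff q i"
  by (rule poly_mapping_eqI) (simp add: lookup_laurent_coeff lookup_add)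

lemma laurent_coeff_sum: "laurent_coeff (sum f S) i = (\<Sum>x\<in>S. laurent_coeff (f x) i)"
  by (induction S rule: infinite_finite_induct) (simp_all add: laurent_coeff_add)

lemma laurent_coeff_of_nat_mult: "laurent_coeff (of_nat c * p) i = of_nat c * laurent_coeff p i"
  by (induction c) (simp_all add: laurent_coeff_add distrib_right)

lemma laurent_coeff_eq_0: "laurent_order_ge t p \<Longrightarrow> i < t \<Longrightarrow> laurent_coeff p i = 0"
  by (rule poly_mapping_eqI) (simp add: lookup_laurent_coeff laurent_order_ge_def)

lemma laurent_coeff_mpoly_to_fls_mult:
  "laurent_coeff (mpoly_to_fls p * q) i = p * laurent_coeff q i"
proof (rule poly_mapping_eqI)
  fix m
  have keys: "Poly_Mapping.keys (mpoly_to_fls p) \<subseteq> Poly_Mapping.keys p"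
    "Poly_Mapping.keys (laurent_coeff q i) \<subseteq> Poly_Mapping.keys q"
    unfolding mpoly_to_fls_def laurent_coeff_def by (rule keys_map_subset)+
  have "Poly_Mapping.lookup (laurent_coeff (mpoly_to_fls p * q) i) m =
    (\<Sum>x\<in>Poly_Mapping.keys p. \<Sum>y\<in>Poly_Mapping.keys q.
       fls_nth (Poly_Mapping.lookup (mpoly_to_fls p) x * Poly_Mapping.lookup q y when m = x + y) i)"
    by (simp add: lookup_laurent_coeff lookup_mult_finite[of "Poly_Mapping.keys p" _ "Poly_Mapping.keys q"]
        keys fls_nth_sum)
  also have "\<dots> = (\<Sum>x\<in>Poly_Mapping.keys p. \<Sum>y\<in>Poly_Mapping.keys q.
       Poly_Mapping.lookup p x * Poly_Mapping.lookup (laurent_coeff q i) y when m = x + y)"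
    by (intro sum.cong refl) (simp add: when_def lookup_mpoly_to_fls lookup_laurent_coeff)
  also have "\<dots> = Poly_Mapping.lookup (p * laurent_coeff q i) m"
    by (simp add: lookup_mult_finite[of "Poly_Mapping.keys p" _ "Poly_Mapping.keys q"] keys)
  finally show "Poly_Mapping.lookup (laurent_coeff (mpoly_to_fls p * q) i) m =
      Poly_Mapping.lookup (p * laurent_coeff q i) m" .
qed

lemma laurent_coeff_mpoly_to_fls_power_mult:
  "laurent_coeff (mpoly_to_fls p ^ k * q) i = p ^ k * laurent_coeff q i"
  by (induction k) (simp_all add: laurent_coeff_mpoly_to_fls_mult mult.assoc)

lemma free_of_var_laurent_coeff: "free_of_var j p \<Longrightarrow> free_of_var j (laurent_coeff p i)"
  unfolding laurent_coeff_def by (rule free_of_var_map)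

lemma hom_poly_laurent_coeff: "hom_poly n d p \<Longrightarrow> hom_poly n d (laurent_coeff p i)"
  unfolding laurent_coeff_def by (rule hom_poly_map)

lemma coeffwise_lim_iff: "coeffwise_lim F f \<longleftrightarrow> laurent_order_ge 0 F \<and> laurent_coeff F 0 = f"
  by (auto simp: coeffwise_lim_def laurent_order_ge_def poly_mapping_eq_iff fun_eq_iff lookup_laurent_coeff)

section \<open>Normal form of the summands\<close>

lemma laurent_order_ge_laurent_order: "laurent_order_ge (laurent_order L) L"
  unfolding laurent_order_ge_def
proof (intro allI impI)
  fix m i assume i: "i < laurent_order L"
  show "fls_nth (Poly_Mapping.lookup L m) i = 0"
  proof (cases "m \<in> Poly_Mapping.keys L")
    case True
    then have "laurent_order L \<le> fls_subdegree (Poly_Mapping.lookup L m)"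
      unfolding laurent_order_def by (intro Min_le) auto
    with i show ?thesis
      by simp
  qed (simp add: in_keys_iff)
qed

text \<open>\<open>\<alpha>\<close> is chosen to remove the \<open>x\<^sub>j\<close> term from \<open>\<beta>\<close>. If \<open>L\<close> has Laurent
  order \<open>q\<close>, its \<open>\<epsilon>\<^sup>q\<close> part is proportional to \<open>l\<close>, so it cancels and \<open>\<beta>\<close>
  has positive order.\<close>

lemma summand_normal_form:
  fixes L :: "complex fls mpoly" and l :: "complex mpoly"
  assumes hL: "hom_poly n 1 L" and lim: "proj_eq (proj_lim_rep L) l"
    and l: "hom_poly n 1 l" "Poly_Mapping.lookup l (Poly_Mapping.single j 1) \<noteq> 0"
  obtains \<alpha> \<beta> where "L = Poly_Mapping.single 0 \<alpha> * (mpoly_to_fls l + \<beta>)"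
    and "hom_poly n 1 \<beta>" and "free_of_var j \<beta>" and "laurent_order_ge 1 \<beta>"
proof -
  define q where "q = laurent_order L"
  obtain c where "c \<noteq> 0" and c: "proj_lim_rep L = Poly_Mapping.map (\<lambda>x. c * x) l"
    using lim by (auto simp: proj_eq_def)
  have L_below: "fls_nth (Poly_Mapping.lookup L m) i = 0" if "i < q" for m i
    using laurent_order_ge_laurent_order that by (simp add: laurent_order_ge_def q_def)
  have L_at: "fls_nth (Poly_Mapping.lookup L m) q = c * Poly_Mapping.lookup l m" for m
    using arg_cong[OF c, of "\<lambda>p. Poly_Mapping.lookup p m"]
    by (simp add: proj_lim_rep_def lookup_laurent_coeff lookup_map q_def)
  define u where "u = Poly_Mapping.single j (1::nat)"
  define \<alpha> where "\<alpha> = Poly_Mapping.lookup L u * fls_const (inverse (Poly_Mapping.lookup l u))"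
  have \<alpha>_nth: "fls_nth \<alpha> i = fls_nth (Poly_Mapping.lookup L u) i / Poly_Mapping.lookup l u" for i
    by (simp add: \<alpha>_def divide_inverse)
  have \<alpha>_at: "fls_nth \<alpha> q = c"
    using l(2) by (simp add: \<alpha>_nth L_at u_def)
  have \<alpha>_below: "fls_nth \<alpha> i = 0" if "i < q" for i
    using that by (simp add: \<alpha>_nth L_below)
  have "\<alpha> \<noteq> 0" and "fls_subdegree \<alpha> = q"
    using \<alpha>_at \<alpha>_below \<open>c \<noteq> 0\<close> by (auto intro: fls_subdegree_eqI)
  define \<Lambda> where "\<Lambda> = L - Poly_Mapping.single 0 \<alpha> * mpoly_to_fls l"
  have \<Lambda>_nth: "fls_nth (Poly_Mapping.lookup \<Lambda> m) i =
      fls_nth (Poly_Mapping.lookup L m) i - fls_nth \<alpha> i * Poly_Mapping.lookup l m" for m i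
    by (simp add: \<Lambda>_def lookup_minus lookup_single_0_mult lookup_mpoly_to_fls)
  have "laurent_order_ge (q + 1) \<Lambda>"
    unfolding laurent_order_ge_def
  proof (intro allI impI)
    fix m i assume "i < q + 1"
    then consider "i < q" | "i = q"
      by linarith
    then show "fls_nth (Poly_Mapping.lookup \<Lambda> m) i = 0"
      by cases (simp_all add: \<Lambda>_nth L_below \<alpha>_below L_at \<alpha>_at)
  qed
  define \<beta> where "\<beta> = Poly_Mapping.single 0 (inverse \<alpha>) * \<Lambda>"
  have "laurent_order_ge (- q + (q + 1)) \<beta>"
    unfolding \<beta>_def using \<open>fls_subdegree \<alpha> = q\<close> \<open>laurent_order_ge (q + 1) \<Lambda>\<close>
    by (intro laurent_order_ge_single_0_mult) simp_all
  then have "laurent_order_ge 1 \<beta>"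
    by simp
  have "Poly_Mapping.single 0 \<alpha> * \<beta> = \<Lambda>"
    using \<open>\<alpha> \<noteq> 0\<close> by (simp add: \<beta>_def mult.assoc[symmetric] mult_single)
  then have "L = Poly_Mapping.single 0 \<alpha> * (mpoly_to_fls l + \<beta>)"
    by (simp add: distrib_left \<Lambda>_def)
  have "hom_poly n (0 + 1) (Poly_Mapping.single 0 \<alpha> * mpoly_to_fls l)"
    unfolding mpoly_to_fls_def by (intro hom_poly_mult hom_poly_single_0 hom_poly_map l(1))
  then have hom_\<Lambda>: "hom_poly n 1 \<Lambda>"
    unfolding \<Lambda>_def by (intro hom_poly_diff hL) simp
  have "hom_poly n 1 \<beta>"
    using hom_poly_mult[OF hom_poly_single_0 hom_\<Lambda>] by (simp add: \<beta>_def)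
  moreover have "Poly_Mapping.lookup \<beta> u = 0"
    using l(2) by (simp add: \<beta>_def lookup_single_0_mult \<Lambda>_def lookup_minus lookup_mpoly_to_fls \<alpha>_def
        mult.assoc u_def)
  ultimately have "free_of_var j \<beta>"
    unfolding u_def by (rule hom_poly_1_free_of_var)
  show thesis
    by (rule that) fact+
qed

section \<open>Power sums\<close>

lemma sum_power_binomial_expansion:
  fixes a :: "'a::comm_semiring_1"
  shows "(\<Sum>k\<in>K. (c k * (a + b k)) ^ d) =
    (\<Sum>s\<le>d. of_nat (d choose s) * a ^ (d - s) * (\<Sum>k\<in>K. c k ^ d * b k ^ s))"
proof -
  have "(c k * (a + b k)) ^ d = c k ^ d * (b k + a) ^ d" for k
    by (simp add: power_mult_distrib add.commute)
  also have "\<dots> k = (\<Sum>s\<le>d. of_nat (d choose s) * a ^ (d - s) * (c k ^ d * b k ^ s))" for k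
    by (simp add: binomial_ring sum_distrib_left mult_ac)
  finally show ?thesis
    by (simp add: sum_distrib_left sum.swap[of _ K])
qed

lemma coeff_mult_linear:
  fixes p :: "'a::comm_semiring_1 poly"
  shows "coeff (p * [:a, 1:]) i = a * coeff p i + (case i of 0 \<Rightarrow> 0 | Suc k \<Rightarrow> coeff p k)"
  by (simp add: mult_pCons_right coeff_pCons)

lemma prod_linear_monic:
  fixes b :: "nat \<Rightarrow> 'a::comm_ring_1"
  shows "degree (\<Prod>k<r. [:- b k, 1:]) = r \<and> coeff (\<Prod>k<r. [:- b k, 1:]) r = 1"
proof (induction r)
  case (Suc r)
  let ?G = "\<Prod>k<r. [:- b k, 1:]"
  have "coeff (?G * [:- b r, 1:]) (Suc r) = 1"
    using Suc by (simp add: coeff_mult_linear coeff_eq_0)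
  moreover have "degree (?G * [:- b r, 1:]) \<le> Suc r"
    using degree_mult_le[of ?G "[:- b r, 1:]"] Suc by simp
  ultimately have "degree (?G * [:- b r, 1:]) = Suc r"
    by (metis antisym le_degree one_neq_zero)
  with \<open>coeff (?G * [:- b r, 1:]) (Suc r) = 1\<close> show ?case
    unfolding prod.lessThan_Suc by blast
qed simp

lemma prod_linear_coeff_laurent_order_ge_1:
  fixes b :: "nat \<Rightarrow> 'a::comm_ring_1 fls mpoly"
  assumes "\<And>k. k < r \<Longrightarrow> laurent_order_ge 1 (b k)" and "i < r"
  shows "laurent_order_ge 1 (coeff (\<Prod>k<r. [:- b k, 1:]) i)"
  using assms
proof (induction r arbitrary: i)
  case (Suc r)
  let ?G = "\<Prod>k<r. [:- b k, 1:]"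
  have G: "laurent_order_ge 0 (coeff ?G i)" for i
    using Suc.IH[of i] Suc.prems(1) prod_linear_monic[of b r]
    by (cases "i < r"; cases "i = r") (auto intro: laurent_order_ge_mono laurent_order_ge_one simp: coeff_eq_0)
  have "laurent_order_ge 1 (- b r * coeff ?G i)"
    using laurent_order_ge_mult[OF laurent_order_ge_uminus[OF Suc.prems(1)[OF lessI]] G] by simp
  moreover have "laurent_order_ge 1 (case i of 0 \<Rightarrow> 0 | Suc k \<Rightarrow> coeff ?G k)"
    using Suc by (cases i) simp_all
  ultimately show ?case
    unfolding prod.lessThan_Suc coeff_mult_linear by (rule laurent_order_ge_add)
qed simp

text \<open>Sum \<open>w\<^sub>k b\<^sub>k\<^sup>s\<^sup>-\<^sup>r G(b\<^sub>k) = 0\<close> over \<open>k\<close>, where \<open>G = \<Prod>\<^sub>k (X - b\<^sub>k)\<close>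
  is monic of degree \<open>r\<close>.\<close>

lemma power_sum_recurrence:
  fixes b w :: "nat \<Rightarrow> 'a::comm_ring_1"
  assumes "r \<le> s"
  shows "(\<Sum>k<r. w k * b k ^ s) =
    - (\<Sum>i<r. coeff (\<Prod>k<r. [:- b k, 1:]) i * (\<Sum>k<r. w k * b k ^ (s - r + i)))"
proof -
  define G where "G = (\<Prod>k<r. [:- b k, 1:])"
  have G: "degree G = r" "coeff G r = 1"
    using prod_linear_monic[of b r] by (simp_all add: G_def)
  have root: "poly G (b k) = 0" if "k < r" for k
    unfolding G_def poly_prod using that by (intro prod_zero) auto
  have "0 = (\<Sum>k<r. w k * b k ^ (s - r) * poly G (b k))"
    by (simp add: root)
  also have "\<dots> = (\<Sum>i\<le>r. coeff G i * (\<Sum>k<r. w k * b k ^ (s - r + i)))"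
    by (simp add: poly_altdef G(1) sum_distrib_left power_add mult_ac sum.swap[of _ "{..<r}"])
  also have "\<dots> = (\<Sum>i<r. coeff G i * (\<Sum>k<r. w k * b k ^ (s - r + i))) + (\<Sum>k<r. w k * b k ^ s)"
    using assms G(2) by (simp add: lessThan_Suc_atMost[symmetric])
  finally show ?thesis
    by (simp add: G_def eq_neg_iff_add_eq_0 add.commute)
qed

lemma power_sum_laurent_order_ge_1:
  fixes b w :: "nat \<Rightarrow> 'a::comm_ring_1 fls mpoly"
  assumes "\<And>k. k < r \<Longrightarrow> laurent_order_ge 1 (b k)" and "r \<le> s"
    and "\<And>t. t < s \<Longrightarrow> laurent_order_ge 0 (\<Sum>k<r. w k * b k ^ t)"
  shows "laurent_order_ge 1 (\<Sum>k<r. w k * b k ^ s)"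
  unfolding power_sum_recurrence[OF assms(2)]
proof (intro laurent_order_ge_uminus laurent_order_ge_sum)
  fix i assume "i \<in> {..<r}"
  then have "laurent_order_ge (1 + 0)
      (coeff (\<Prod>k<r. [:- b k, 1:]) i * (\<Sum>k<r. w k * b k ^ (s - r + i)))"
    using assms by (intro laurent_order_ge_mult prod_linear_coeff_laurent_order_ge_1) auto
  then show "laurent_order_ge 1
      (coeff (\<Prod>k<r. [:- b k, 1:]) i * (\<Sum>k<r. w k * b k ^ (s - r + i)))"
    by simp
qed

section \<open>Limits of border sums\<close>

lemma laurent_coeff_power_expansion:
  "laurent_coeff (\<Sum>s\<le>d. of_nat (d choose s) * mpoly_to_fls l ^ (d - s) * B s) i =
    (\<Sum>s\<le>d. l ^ (d - s) * (of_nat (d choose s) * laurent_coeff (B s) i))"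
  by (simp add: laurent_coeff_sum laurent_coeff_of_nat_mult laurent_coeff_mpoly_to_fls_power_mult
      mult.assoc mult.left_commute)

lemma power_expansion_laurent_order_ge_0:
  fixes l :: "complex mpoly" and B :: "nat \<Rightarrow> complex fls mpoly"
  assumes l: "hom_poly n 1 l" "Poly_Mapping.lookup l (Poly_Mapping.single j 1) \<noteq> 0"
    and free: "\<And>s. free_of_var j (B s)"
    and pole_free: "laurent_order_ge 0 (\<Sum>s\<le>d. of_nat (d choose s) * mpoly_to_fls l ^ (d - s) * B s)"
    and "s \<le> d"
  shows "laurent_order_ge 0 (B s)"
proof -
  have "laurent_coeff (B s) i = 0" if "i < 0" for i
  proof -
    have "(\<Sum>s\<le>d. l ^ (d - s) * (of_nat (d choose s) * laurent_coeff (B s) i)) = 0"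
      using laurent_coeff_eq_0[OF pole_free that] by (simp add: laurent_coeff_power_expansion)
    then have "\<forall>s\<le>d. of_nat (d choose s) * laurent_coeff (B s) i = 0"
      using free by (intro power_expansion_free_of_var_unique[OF l])
        (simp add: free_of_var_mult free_of_var_of_nat free_of_var_laurent_coeff)
    with \<open>s \<le> d\<close> show ?thesis
      by simp
  qed
  then show ?thesis
    by (simp add: laurent_order_ge_def poly_mapping_eq_iff fun_eq_iff lookup_laurent_coeff)
qed

lemma power_expansion_factor:
  fixes l :: "'a::comm_semiring_1 mpoly"
  assumes l: "hom_poly n 1 l"
    and C: "\<And>s. s < r \<Longrightarrow> hom_poly n s (C s)" "\<And>s. r \<le> s \<Longrightarrow> s \<le> d \<Longrightarrow> C s = 0"
    and "r - 1 \<le> d"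
  shows "\<exists>g. hom_poly n (r - 1) g \<and> (\<Sum>s\<le>d. l ^ (d - s) * C s) = l ^ (d + 1 - r) * g"
proof -
  define g where "g = (\<Sum>s<r. l ^ (r - 1 - s) * C s)"
  have "(\<Sum>s\<le>d. l ^ (d - s) * C s) = (\<Sum>s<r. l ^ (d - s) * C s)"
    by (rule sum.mono_neutral_right) (use assms in auto)
  also have "\<dots> = l ^ (d + 1 - r) * g"
    unfolding g_def sum_distrib_left
  proof (rule sum.cong[OF refl])
    fix s assume "s \<in> {..<r}"
    then have "d - s = (d + 1 - r) + (r - 1 - s)"
      using assms(4) by auto
    then show "l ^ (d - s) * C s = l ^ (d + 1 - r) * (l ^ (r - 1 - s) * C s)"
      by (simp add: power_add mult.assoc)
  qed
  finally have "(\<Sum>s\<le>d. l ^ (d - s) * C s) = l ^ (d + 1 - r) * g" .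
  moreover have "hom_poly n (r - 1) g"
    unfolding g_def
  proof (rule hom_poly_sum)
    fix s assume "s \<in> {..<r}"
    then have "hom_poly n ((r - 1 - s) * 1 + s) (l ^ (r - 1 - s) * C s)"
      by (intro hom_poly_mult hom_poly_power l C) simp
    with \<open>s \<in> {..<r}\<close> show "hom_poly n (r - 1) (l ^ (r - 1 - s) * C s)"
      by simp
  qed
  ultimately show ?thesis
    by blast
qed

lemma normalized_border_sum_limit:
  fixes l f :: "complex mpoly" and \<alpha> :: "nat \<Rightarrow> complex fls" and \<beta> :: "nat \<Rightarrow> complex fls mpoly"
  assumes l: "hom_poly n 1 l" "Poly_Mapping.lookup l (Poly_Mapping.single j 1) \<noteq> 0"
    and \<beta>: "\<And>k. k < r \<Longrightarrow> hom_poly n 1 (\<beta> k) \<and> free_of_var j (\<beta> k) \<and> laurent_order_ge 1 (\<beta> k)"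
    and lim: "coeffwise_lim (\<Sum>k<r. (Poly_Mapping.single 0 (\<alpha> k) * (mpoly_to_fls l + \<beta> k)) ^ d) f"
    and "r - 1 \<le> d"
  shows "\<exists>g. hom_poly n (r - 1) g \<and> f = l ^ (d + 1 - r) * g"
proof -
  define B where "B s = (\<Sum>k<r. Poly_Mapping.single 0 (\<alpha> k) ^ d * \<beta> k ^ s)" for s
  have expansion: "(\<Sum>k<r. (Poly_Mapping.single 0 (\<alpha> k) * (mpoly_to_fls l + \<beta> k)) ^ d) =
      (\<Sum>s\<le>d. of_nat (d choose s) * mpoly_to_fls l ^ (d - s) * B s)"
    unfolding B_def by (rule sum_power_binomial_expansion)
  have free: "free_of_var j (B s)" for s
    unfolding B_def using \<beta> by (intro free_of_var_sum free_of_var_mult free_of_var_power free_of_var_single_0) auto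
  have "hom_poly n (d * 0 + s * 1) (B s)" for s
    unfolding B_def using \<beta> by (intro hom_poly_sum hom_poly_mult hom_poly_power hom_poly_single_0) auto
  then have hom: "hom_poly n s (B s)" for s
    by simp
  have pole_free: "laurent_order_ge 0 (B s)" if "s \<le> d" for s
    using lim that unfolding coeffwise_lim_iff expansion
    by (intro power_expansion_laurent_order_ge_0[OF l free]) auto
  have "laurent_order_ge 1 (B s)" if "r \<le> s" "s \<le> d" for s
    using \<beta> that pole_free unfolding B_def by (intro power_sum_laurent_order_ge_1) auto
  then have "laurent_coeff (B s) 0 = 0" if "r \<le> s" "s \<le> d" for s
    using that by (intro laurent_coeff_eq_0) auto
  moreover have "hom_poly n s (of_nat (d choose s) * laurent_coeff (B s) 0)" for s
    using hom_poly_mult[OF hom_poly_of_nat hom_poly_laurent_coeff[OF hom]] by simp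
  ultimately have "\<exists>g. hom_poly n (r - 1) g \<and>
      (\<Sum>s\<le>d. l ^ (d - s) * (of_nat (d choose s) * laurent_coeff (B s) 0)) = l ^ (d + 1 - r) * g"
    using \<open>r - 1 \<le> d\<close> by (intro power_expansion_factor[OF l(1)]) auto
  moreover have "f = (\<Sum>s\<le>d. l ^ (d - s) * (of_nat (d choose s) * laurent_coeff (B s) 0))"
    using lim by (simp add: coeffwise_lim_iff expansion laurent_coeff_power_expansion)
  ultimately show ?thesis
    by simp
qed

theorem lemma7:
  fixes n d r :: nat and f l :: "complex mpoly" and ls :: "nat \<Rightarrow> complex fls mpoly"
  assumes "hom_poly n d f"
    and "hom_poly n 1 l" and "l \<noteq> 0"
    and "local_border_dec n d f r l ls"
    and "r - 1 \<le> d"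
  shows "\<exists>g. hom_poly n (r - 1) g \<and> f = l ^ (d + 1 - r) * g"
proof -
  obtain j where j: "Poly_Mapping.lookup l (Poly_Mapping.single j 1) \<noteq> 0"
    using hom_poly_1_ex_var[OF assms(2,3)] .
  have summands: "\<forall>k<r. hom_poly n 1 (ls k) \<and> proj_eq (proj_lim_rep (ls k)) l"
    and lim: "coeffwise_lim (\<Sum>k<r. ls k ^ d) f"
    using assms(4) by (auto simp: local_border_dec_def)
  have "\<forall>k<r. \<exists>\<alpha> \<beta>. ls k = Poly_Mapping.single 0 \<alpha> * (mpoly_to_fls l + \<beta>) \<and>
      hom_poly n 1 \<beta> \<and> free_of_var j \<beta> \<and> laurent_order_ge 1 \<beta>"
    using summands summand_normal_form[OF _ _ assms(2) j] by metis
  then obtain \<alpha> \<beta> where normal: "\<forall>k<r. ls k = Poly_Mapping.single 0 (\<alpha> k) * (mpoly_to_fls l + \<beta> k) \<and>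
      hom_poly n 1 (\<beta> k) \<and> free_of_var j (\<beta> k) \<and> laurent_order_ge 1 (\<beta> k)"
    by metis
  then have "(\<Sum>k<r. ls k ^ d) = (\<Sum>k<r. (Poly_Mapping.single 0 (\<alpha> k) * (mpoly_to_fls l + \<beta> k)) ^ d)"
    by simp
  with lim normal show ?thesis
    by (intro normalized_border_sum_limit[OF assms(2) j _ _ assms(5)]) auto
qed

end
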